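(* For any $K\in\mathbb N$, there exists a $\textsc{ReLU}$+$\textsc{Step}$ network $f:\mathbb{R}\rightarrow\mathbb{R}$ of width $2$ such that $f(x)=q_K(x)$ for all $x\in[0,1]$.
   Context: $\mathcal C_K:=\{0,2^{-K},2\cdot 2^{-K},\dots,1-2^{-K}\}$ and $q_K:[0,1]\to\mathcal C_K$, $q_K(x):=\max\{c\in\mathcal C_K: c\le x\}$ (so $q_K(1)=1-2^{-K}$). $\textsc{ReLU}(x)=\max\{x,0\}$, $\textsc{Step}(x)=\mathbf 1[x\ge0]$. A $\textsc{ReLU}$+$\textsc{Step}$ network is $t_L\circ\sigma_{L-1}\circ\cdots\circ\sigma_1\circ t_1$ with affine maps $t_\ell:\mathbb R^{d_{\ell-1}}\to\mathbb R^{d_\ell}$ and $\sigma_\ell$ applying to each coordinate an activation chosen (per neuron) from $\{\textsc{ReLU},\textsc{Step}\}$; its width is $\max\{d_1,\dots,d_{L-1}\}$. *)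

theory Defs
  imports Complex_Main
begin

definition grid :: "nat \<Rightarrow> real set" where
  "grid K = {real j / 2 ^ K | j. j < 2 ^ K}"

definition quant :: "nat \<Rightarrow> real \<Rightarrow> real" where
  "quant K x = Max {c \<in> grid K. c \<le> x}"

datatype act = ReLU | Step

fun act_fun :: "act \<Rightarrow> real \<Rightarrow> real" where
  "act_fun ReLU x = max x 0"
| "act_fun Step x = (if x \<ge> 0 then 1 else 0)"

text \<open>Vectors in R^d are functions nat => real of which only indices < d matter.
  An affine map R^din -> R^dout is given by a weight matrix W and bias b.\<close>
definition affine :: "nat \<Rightarrow> (nat \<Rightarrow> nat \<Rightarrow> real) \<Rightarrow> (nat \<Rightarrow> real) \<Rightarrow> (nat \<Rightarrow> real) \<Rightarrow> (nat \<Rightarrow> real)" where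
  "affine din W b x = (\<lambda>i. (\<Sum>j<din. W i j * x j) + b i)"

text \<open>A network is given by dimensions ds = [d0,...,dL], affine maps (Ws, bs) of
  length L and per-neuron activation choices for the L-1 hidden layers.\<close>
fun net_eval :: "nat list \<Rightarrow> (nat \<Rightarrow> nat \<Rightarrow> real) list \<Rightarrow> (nat \<Rightarrow> real) list \<Rightarrow> (nat \<Rightarrow> act) list
                 \<Rightarrow> (nat \<Rightarrow> real) \<Rightarrow> (nat \<Rightarrow> real)" where
  "net_eval [d0, d1] [W] [b] [] x = affine d0 W b x"
| "net_eval (d0 # d1 # d2 # ds) (W # Ws) (b # bs) (a # as) x =
     net_eval (d1 # d2 # ds) Ws bs as (\<lambda>i. act_fun (a i) (affine d0 W b x i))"
| "net_eval _ _ _ _ x = (\<lambda>_. 0)"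

definition well_formed :: "nat list \<Rightarrow> (nat \<Rightarrow> nat \<Rightarrow> real) list \<Rightarrow> (nat \<Rightarrow> real) list \<Rightarrow> (nat \<Rightarrow> act) list \<Rightarrow> bool" where
  "well_formed ds Ws bs as \<longleftrightarrow> length ds \<ge> 2 \<and> length Ws = length ds - 1 \<and>
     length bs = length ds - 1 \<and> length as = length ds - 2"

definition width :: "nat list \<Rightarrow> nat" where
  "width ds = Max (insert 0 (set (butlast (tl ds))))"

definition net_fun :: "nat list \<Rightarrow> (nat \<Rightarrow> nat \<Rightarrow> real) list \<Rightarrow> (nat \<Rightarrow> real) list \<Rightarrow> (nat \<Rightarrow> act) list \<Rightarrow> real \<Rightarrow> real" where
  "net_fun ds Ws bs as x = net_eval ds Ws bs as (\<lambda>_. x) 0"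

end

theory Submission
  imports Defs
begin

text \<open>The network carries a single real number s, starting at s = x, through one block of two
  layers per threshold c = k / 2^K, taken in the order k = 2^K - 1, ..., 1.  A block replaces s
  by the negative code -2 - c as soon as s \<ge> c and leaves s unchanged otherwise; negative
  values are never changed again.  So the first threshold passed, the largest k / 2^K \<le> x,
  is recorded, and the readout max (-2 - s) 0 returns it (or 0 if no threshold was passed).\<close>

definition layer :: "nat \<Rightarrow> (nat \<Rightarrow> nat \<Rightarrow> real) \<Rightarrow> (nat \<Rightarrow> real) \<Rightarrow> (nat \<Rightarrow> act)
    \<Rightarrow> (nat \<Rightarrow> real) \<Rightarrow> (nat \<Rightarrow> real)" where
  "layer d W b a v = (\<lambda>i. act_fun (a i) (affine d W b v i))"

lemma net_eval_Cons:
  assumes "ds \<noteq> []"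
  shows "net_eval (d0 # d1 # ds) (W # Ws) (b # bs) (a # as) v =
         net_eval (d1 # ds) Ws bs as (layer d0 W b a v)"
  using assms by (cases ds) (auto simp: layer_def)

definition mark :: "real \<Rightarrow> real \<Rightarrow> real" where
  "mark c s = (if c \<le> s then -2 - c else s)"

fun mark_down :: "real \<Rightarrow> nat \<Rightarrow> real \<Rightarrow> real" where
  "mark_down D 0 s = s"
| "mark_down D (Suc n) s = mark_down D n (mark (real (Suc n) / D) s)"

lemma mark_down_neg:
  assumes "D > 0" "s < 0"
  shows "mark_down D n s = s"
proof (induction n)
  case (Suc n)
  have "0 \<le> real (Suc n) / D" using assms(1) by simp
  then have "mark (real (Suc n) / D) s = s" using assms(2) by (simp add: mark_def)
  then show ?case using Suc.IH by simp
qed simp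

lemma mark_down_nonneg:
  assumes "D > 0" "0 \<le> x"
  shows "mark_down D n x =
    (if 1 \<le> min (nat \<lfloor>x * D\<rfloor>) n then -2 - real (min (nat \<lfloor>x * D\<rfloor>) n) / D else x)"
proof (induction n)
  case (Suc n)
  show ?case
  proof (cases "real (Suc n) / D \<le> x")
    case True
    then have "Suc n \<le> nat \<lfloor>x * D\<rfloor>"
      using assms by (simp add: field_simps le_nat_floor)
    moreover have "0 \<le> real (Suc n) / D" using assms(1) by simp
    then have "mark_down D n (-2 - real (Suc n) / D) = -2 - real (Suc n) / D"
      using assms(1) by (intro mark_down_neg) linarith+
    ultimately show ?thesis using True by (simp add: mark_def)
  next
    case False
    then have "nat \<lfloor>x * D\<rfloor> \<le> n"
      using assms by (simp add: field_simps) linarith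
    then show ?thesis using False Suc.IH by (simp add: mark_def min_absorb1)
  qed
qed simp

lemma readout_mark_down:
  assumes "D > 0" "0 \<le> x"
  shows "max (-2 - mark_down D n x) 0 = real (min (nat \<lfloor>x * D\<rfloor>) n) / D"
proof (cases "1 \<le> min (nat \<lfloor>x * D\<rfloor>) n")
  case False
  then have "min (nat \<lfloor>x * D\<rfloor>) n = 0" by linarith
  then show ?thesis using assms by (simp add: mark_down_nonneg)
qed (use assms in \<open>simp add: mark_down_nonneg\<close>)

lemma quant_eq_floor:
  assumes "0 \<le> x"
  shows "quant K x = real (min (nat \<lfloor>x * 2 ^ K\<rfloor>) (2 ^ K - 1)) / 2 ^ K"
proof -
  define j0 where "j0 = min (nat \<lfloor>x * 2 ^ K\<rfloor>) (2 ^ K - 1)"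
  have fin: "finite {c \<in> grid K. c \<le> x}"
  proof -
    have "grid K = (\<lambda>j. real j / 2 ^ K) ` {..<2 ^ K}" by (auto simp: grid_def)
    then show ?thesis by simp
  qed
  have "real j0 \<le> real (nat \<lfloor>x * 2 ^ K\<rfloor>)" by (simp add: j0_def)
  also have "\<dots> \<le> x * 2 ^ K" using assms by simp
  finally have "real j0 \<le> x * 2 ^ K" .
  moreover have "(0::nat) < 2 ^ K" by simp
  then have "j0 < 2 ^ K" unfolding j0_def by linarith
  ultimately have mem: "real j0 / 2 ^ K \<in> {c \<in> grid K. c \<le> x}"
    by (auto simp: grid_def field_simps)
  have ub: "c \<le> real j0 / 2 ^ K" if c: "c \<in> {c \<in> grid K. c \<le> x}" for c
  proof -
    obtain j where j: "c = real j / 2 ^ K" "j < 2 ^ K" "c \<le> x"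
      using c unfolding grid_def by blast
    have "real j = c * 2 ^ K" using j(1) by simp
    also have "\<dots> \<le> x * 2 ^ K" using j(3) by (simp add: mult_right_mono)
    finally have "real j \<le> x * 2 ^ K" .
    then have "j \<le> nat \<lfloor>x * 2 ^ K\<rfloor>" by (simp add: le_nat_floor)
    then have "j \<le> j0" using j(2) by (simp add: j0_def)
    then show ?thesis using j(1) by (simp add: divide_right_mono)
  qed
  show ?thesis
    unfolding quant_def j0_def[symmetric] by (rule Max_eqI[OF fin ub mem])
qed

text \<open>A state v of two neurons carries the value v 0 + v 1 - 10; the offset keeps the input
  of the second neuron's ReLU nonnegative, so that it passes the value through unchanged.\<close>

definition state_val :: "(nat \<Rightarrow> real) \<Rightarrow> real" where
  "state_val v = v 0 + v 1 - 10"

definition input_W :: "nat \<Rightarrow> nat \<Rightarrow> real" where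
  "input_W i j = (if i = 0 then 1 else 0)"

definition input_b :: "nat \<Rightarrow> real" where
  "input_b i = (if i = 0 then 10 else 0)"

definition test_W :: "nat \<Rightarrow> nat \<Rightarrow> real" where
  "test_W i j = 1"

definition test_b :: "real \<Rightarrow> nat \<Rightarrow> real" where
  "test_b c i = (if i = 0 then -10 - c else 0)"

definition test_act :: "nat \<Rightarrow> act" where
  "test_act i = (if i = 0 then Step else ReLU)"

text \<open>Given [s \<ge> c] and s + 10, produce (10 + (-2 - c)) [s \<ge> c] and ReLU (s + 10 - 11 [s \<ge> c]),
  where the latter vanishes when s \<ge> c because s \<le> 1.\<close>
definition mark_W :: "real \<Rightarrow> nat \<Rightarrow> nat \<Rightarrow> real" where
  "mark_W c i j = (if i = 0 then (if j = 0 then 8 - c else 0) else if j = 0 then -11 else 1)"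

definition readout_W :: "nat \<Rightarrow> nat \<Rightarrow> real" where
  "readout_W i j = (if i = 0 then -1 else 0)"

definition readout_b :: "nat \<Rightarrow> real" where
  "readout_b i = (if i = 0 then 8 else 0)"

definition output_W :: "nat \<Rightarrow> nat \<Rightarrow> real" where
  "output_W i j = (if j = 0 then 1 else 0)"

definition zero_b :: "nat \<Rightarrow> real" where
  "zero_b i = 0"

definition relu_act :: "nat \<Rightarrow> act" where
  "relu_act i = ReLU"

definition block :: "real \<Rightarrow> (nat \<Rightarrow> real) \<Rightarrow> (nat \<Rightarrow> real)" where
  "block c v = layer 2 (mark_W c) zero_b relu_act (layer 2 test_W (test_b c) test_act v)"

lemma state_val_block:
  assumes "-10 \<le> state_val v" "state_val v \<le> 1" "0 \<le> c" "c \<le> 1"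
  shows "state_val (block c v) = mark c (state_val v)"
  using assms
  by (auto simp: state_val_def block_def layer_def affine_def mark_W_def zero_b_def relu_act_def
      test_W_def test_b_def test_act_def mark_def numeral_2_eq_2 max_def)

fun block_Ws :: "real \<Rightarrow> nat \<Rightarrow> (nat \<Rightarrow> nat \<Rightarrow> real) list" where
  "block_Ws D 0 = []"
| "block_Ws D (Suc n) = test_W # mark_W (real (Suc n) / D) # block_Ws D n"

fun block_bs :: "real \<Rightarrow> nat \<Rightarrow> (nat \<Rightarrow> real) list" where
  "block_bs D 0 = []"
| "block_bs D (Suc n) = test_b (real (Suc n) / D) # zero_b # block_bs D n"

fun block_acts :: "nat \<Rightarrow> (nat \<Rightarrow> act) list" where
  "block_acts 0 = []"
| "block_acts (Suc n) = test_act # relu_act # block_acts n"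

lemma length_blocks:
  "length (block_Ws D n) = 2 * n" "length (block_bs D n) = 2 * n" "length (block_acts n) = 2 * n"
  by (induction n) auto

lemma net_eval_blocks:
  assumes "D > 0" "real n \<le> D" "-10 \<le> state_val v" "state_val v \<le> 1"
  shows "net_eval (2 # replicate (2 * n) 2 @ [2, 1]) (block_Ws D n @ [readout_W, output_W])
      (block_bs D n @ [readout_b, zero_b]) (block_acts n @ [relu_act]) v 0 =
    max (-2 - mark_down D n (state_val v)) 0"
  using assms(2-)
proof (induction n arbitrary: v)
  case 0
  then show ?case
    by (simp add: affine_def readout_W_def readout_b_def output_W_def zero_b_def relu_act_def
        state_val_def numeral_2_eq_2)
next
  case (Suc n)
  define c where "c = real (Suc n) / D"
  have c: "0 \<le> c" "c \<le> 1" using Suc.prems assms(1) by (auto simp: c_def)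
  have "replicate (2 * Suc n) (2::nat) = 2 # 2 # replicate (2 * n) 2" by simp
  then have "net_eval (2 # replicate (2 * Suc n) 2 @ [2, 1]) (block_Ws D (Suc n) @ [readout_W, output_W])
      (block_bs D (Suc n) @ [readout_b, zero_b]) (block_acts (Suc n) @ [relu_act]) v =
    net_eval (2 # replicate (2 * n) 2 @ [2, 1]) (block_Ws D n @ [readout_W, output_W])
      (block_bs D n @ [readout_b, zero_b]) (block_acts n @ [relu_act]) (block c v)"
    by (simp add: net_eval_Cons block_def layer_def c_def)
  moreover have "state_val (block c v) = mark c (state_val v)"
    using state_val_block Suc.prems c by blast
  moreover have "-10 \<le> mark c (state_val v)" "mark c (state_val v) \<le> 1"
    using Suc.prems c by (auto simp: mark_def)
  ultimately show ?case using Suc.IH[of "block c v"] Suc.prems by (simp add: c_def)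
qed

theorem lemma4:
  fixes K :: nat
  shows "\<exists>ds Ws bs as. well_formed ds Ws bs as \<and> hd ds = 1 \<and> last ds = 1 \<and>
           width ds = 2 \<and> (\<forall>x\<in>{0..1::real}. net_fun ds Ws bs as x = quant K x)"
proof -
  define N :: nat where "N = 2 ^ K - 1"
  define D :: real where "D = 2 ^ K"
  define ds where "ds = 1 # 2 # replicate (2 * N) 2 @ [2, 1::nat]"
  define Ws where "Ws = input_W # block_Ws D N @ [readout_W, output_W]"
  define bs where "bs = input_b # block_bs D N @ [readout_b, zero_b]"
  define as where "as = relu_act # block_acts N @ [relu_act]"
  have "well_formed ds Ws bs as"
    by (simp add: well_formed_def ds_def Ws_def bs_def as_def length_blocks)
  moreover have "set (butlast (tl ds)) = {2}"
    by (auto simp: ds_def butlast_append)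
  then have "width ds = 2" by (simp add: width_def)
  moreover have "net_fun ds Ws bs as x = quant K x" if "x \<in> {0..1}" for x
  proof -
    let ?v = "layer 1 input_W input_b relu_act (\<lambda>_. x)"
    have "state_val ?v = x"
      using that by (simp add: state_val_def layer_def affine_def input_W_def input_b_def relu_act_def)
    moreover have "real N \<le> D" by (simp add: N_def D_def of_nat_diff)
    ultimately have "net_fun ds Ws bs as x = max (-2 - mark_down D N x) 0"
      using that net_eval_blocks[of D N ?v]
      by (simp add: net_fun_def ds_def Ws_def bs_def as_def net_eval_Cons D_def)
    then show ?thesis
      using that by (simp add: readout_mark_down quant_eq_floor D_def N_def)
  qed
  ultimately show ?thesis
    by (intro exI[of _ ds] exI[of _ Ws] exI[of _ bs] exI[of _ as]) (simp add: ds_def)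
qed

end
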